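(* Let $n\in\{2,3\}$ and $\Lambda>-1$. There is a constant $C$ (depending only on $n,\Lambda$) such that for any $t\ge 2$ and any sufficiently smooth function $w$ defined on $\Sigma^{\rm{ex}}_t=\{x\in\mathbb{R}^n:|x|\ge t-1\}$ (as a slice of a function of $(t,x)$), $$\int_{\Sigma^{\rm{ex}}_t}(2+r-t)^\Lambda|Z_kw|^2{\rm{d}}x\le C\sum_{|J|\le 1}\int_{\Sigma^{\rm{ex}}_t}(2+r-t)^{\Lambda+2}|\partial Z^{J}w|^2{\rm{d}}x,\quad k\in\{1,\dots,n_2\},$$ $$\int_{\Sigma^{\rm{ex}}_t}(2+r-t)^\Lambda|L_0w|^2{\rm{d}}x\le C\sum_{|J|\le 1}\int_{\Sigma^{\rm{ex}}_t}(2+r-t)^{\Lambda+2}|\partial Z^Jw|^2{\rm{d}}x.$$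
   Context: $r=|x|$. Lorentz boosts $L_a=x_a\partial_t+t\partial_a$ ($1\le a\le n$), rotations $\Omega_{ab}=x_a\partial_b-x_b\partial_a$ ($1\le a<b\le n$), scaling $L_0=t\partial_t+x^a\partial_a$. $n_2=(n^2+n)/2$ and $\{Z_k\}_{k=1}^{n_2}=\{(L_a)_{1\le a\le n},(\Omega_{ab})_{1\le a<b\le n}\}$; for $J=(j_1,\dots,j_{n_2})$, $Z^J=\prod_k Z_k^{j_k}$, $|J|=\sum j_k$. $|\partial u|=(|\partial_tu|^2+\sum_a|\partial_au|^2)^{1/2}$. *)

theory Defs
  imports "HOL-Analysis.Analysis"
begin

type_synonym 'n stfun = "real \<times> (real^'n) \<Rightarrow> real"

definition pd :: "'n::finite stfun \<Rightarrow> real \<times> (real^'n) \<Rightarrow> real \<times> (real^'n) \<Rightarrow> real" where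
  "pd w v p = frechet_derivative w (at p) v"

definition dt :: "'n::finite stfun \<Rightarrow> 'n stfun" where
  "dt w = pd w (1, 0)"

definition dx :: "'n::finite \<Rightarrow> 'n stfun \<Rightarrow> 'n stfun" where
  "dx a w = pd w (0, axis a 1)"

definition C2 :: "'n::finite stfun \<Rightarrow> bool" where
  "C2 w \<longleftrightarrow> (\<forall>p. w differentiable at p)
     \<and> (\<forall>v p. pd w v differentiable at p)
     \<and> (\<forall>v u. continuous_on UNIV (pd (pd w v) u))"

definition Lb :: "'n::finite \<Rightarrow> 'n stfun \<Rightarrow> 'n stfun" where
  "Lb a w = (\<lambda>(s, x). x $ a * dt w (s, x) + s * dx a w (s, x))"

definition Om :: "'n::finite \<Rightarrow> 'n \<Rightarrow> 'n stfun \<Rightarrow> 'n stfun" where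
  "Om a b w = (\<lambda>(s, x). x $ a * dx b w (s, x) - x $ b * dx a w (s, x))"

definition L0 :: "'n::finite stfun \<Rightarrow> 'n stfun" where
  "L0 w = (\<lambda>(s, x). s * dt w (s, x) + (\<Sum>a\<in>UNIV. x $ a * dx a w (s, x)))"

definition gradsq :: "'n::finite stfun \<Rightarrow> 'n stfun" where
  "gradsq w p = (dt w p)\<^sup>2 + (\<Sum>a\<in>UNIV. (dx a w p)\<^sup>2)"

text \<open>sum over |J| \<le> 1 of |\<partial> Z^J w|^2 : J = 0, the n boosts, and the rotations with a < b.\<close>
definition gradZsq :: "('n::{finite,linorder}) stfun \<Rightarrow> 'n stfun" where
  "gradZsq w p = gradsq w p + (\<Sum>a\<in>UNIV. gradsq (Lb a w) p)
      + (\<Sum>(a, b)\<in>{(a, b). a < b}. gradsq (Om a b w) p)"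

definition Sigma_ex :: "real \<Rightarrow> (real^'n::finite) set" where
  "Sigma_ex t = {x. norm x \<ge> t - 1}"

definition wint :: "real \<Rightarrow> real \<Rightarrow> ('n::finite stfun) \<Rightarrow> ennreal" where
  "wint \<Lambda> t f = (\<integral>\<^sup>+ x \<in> Sigma_ex t. ennreal ((2 + norm x - t) powr \<Lambda> * f (t, x)) \<partial>lborel)"

end

theory Submission
  imports Defs
begin

text \<open>
  Along each ray \<open>s \<mapsto> s y\<close> the weight \<open>\<rho> = 2 + r - t\<close> grows linearly, and differentiating
  \<open>\<rho>\<^bsup>\<Lambda>+1\<^esup> f\<^sup>2 s\<^bsup>n-1\<^esup>\<close> and absorbing the cross term by AM-GM gives the one-dimensional Hardy
  inequality \<open>\<integral> \<rho>\<^sup>\<Lambda> f\<^sup>2 s\<^bsup>n-1\<^esup> \<le> 4/(\<Lambda>+1)\<^sup>2 \<integral> \<rho>\<^bsup>\<Lambda>+2\<^esup> (\<partial>\<^sub>s f)\<^sup>2 s\<^bsup>n-1\<^esup>\<close>. The boundary term at infinity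
  vanishes along a sequence because the left-hand side is finite, which holds since every
  \<open>Z\<^sub>k w\<close> is bounded by \<open>t \<rho> |\<partial>w|\<close>. Averaging over the rays through the annulus
  \<open>1 \<le> |y| \<le> 2\<close> turns this into the inequality on \<open>\<Sigma>\<^sup>e\<^sup>x\<^sub>t\<close>, applied to \<open>F = Z\<^sub>k w\<close> with
  \<open>|\<partial>\<^sub>r F| \<le> |\<partial> Z\<^sub>k w|\<close>. For the scaling field, \<open>r\<^sup>2 L\<^sub>0 w = t x\<cdot>(L\<^sub>a w)\<^sub>a + (r\<^sup>2 - t\<^sup>2) x\<cdot>\<nabla>w\<close>
  bounds \<open>|L\<^sub>0 w|\<close> pointwise by the boosts and \<open>\<rho> |\<partial>w|\<close>.
\<close>

section \<open>A one-dimensional weighted Hardy inequality\<close>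

lemma has_integral_inverse_real:
  fixes a b :: real
  assumes "0 < a" "a \<le> b"
  shows "((\<lambda>s. 1 / s) has_integral (ln b - ln a)) {a..b}"
proof (rule fundamental_theorem_of_calculus)
  fix s assume "s \<in> {a..b}"
  then have "0 < s" using assms by auto
  then show "(ln has_vector_derivative 1 / s) (at s within {a..b})"
    by (auto intro!: derivative_eq_intros simp: has_real_derivative_iff_has_vector_derivative[symmetric])
qed (use assms in auto)

lemma finite_nn_integral_ex_le_inverse:
  fixes h :: "real \<Rightarrow> real"
  assumes a: "0 < a" and fin: "(\<integral>\<^sup>+s\<in>{a..}. ennreal (h s) \<partial>lborel) < \<infinity>" and \<epsilon>: "0 < \<epsilon>"
  shows "\<exists>R\<ge>R0. R * h R \<le> \<epsilon>"
proof (rule ccontr)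
  assume never_small: "\<not> ?thesis"
  have big: "\<epsilon> / s \<le> h s" if "R0 \<le> s" "0 < s" for s
  proof -
    have "\<epsilon> < s * h s" using never_small that(1) not_le by blast
    then show ?thesis using that(2) by (simp add: field_simps)
  qed
  obtain M where M: "(\<integral>\<^sup>+s\<in>{a..}. ennreal (h s) \<partial>lborel) = ennreal M" "0 \<le> M"
    using fin by (auto simp: less_top_ennreal)
  define c where "c = max R0 a"
  define N where "N = M / \<epsilon> + 1"
  have c: "0 < c" "a \<le> c" "R0 \<le> c" using a by (auto simp: c_def)
  have N: "0 \<le> N" using M(2) \<epsilon> by (simp add: N_def)
  have "((\<lambda>s. \<epsilon> / s) has_integral \<epsilon> * N) {c..c * exp N}"
    using has_integral_mult_right[OF has_integral_inverse_real[of c "c * exp N"], of \<epsilon>] c N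
    by (simp add: ln_mult)
  then have "ennreal (\<epsilon> * N) = (\<integral>\<^sup>+s\<in>{c..c * exp N}. ennreal (\<epsilon> / s) \<partial>lborel)"
    using \<epsilon> c by (intro nn_integral_has_integral_lebesgue'[symmetric]) auto
  also have "\<dots> \<le> (\<integral>\<^sup>+s\<in>{a..}. ennreal (h s) \<partial>lborel)"
    using c by (intro nn_integral_mono) (auto simp: indicator_def intro!: ennreal_leI big)
  finally have "\<epsilon> * N \<le> M"
    unfolding M(1) using M(2) by simp
  moreover have "\<epsilon> * N = M + \<epsilon>" using \<epsilon> by (simp add: N_def field_simps)
  ultimately show False using \<epsilon> by simp
qed

lemma borel_measurable_ennreal_indicator_continuous_on:
  fixes f :: "'a::topological_space \<Rightarrow> real"
  assumes "A \<in> sets borel" "continuous_on A f"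
  shows "(\<lambda>x. ennreal (f x) * indicator A x) \<in> borel_measurable borel"
proof -
  have "(\<lambda>x. indicator A x *\<^sub>R f x) \<in> borel_measurable borel"
    using assms by (rule borel_measurable_continuous_on_indicator)
  then have "(\<lambda>x. ennreal (indicator A x *\<^sub>R f x)) \<in> borel_measurable borel"
    by measurable
  also have "(\<lambda>x. ennreal (indicator A x *\<^sub>R f x)) = (\<lambda>x. ennreal (f x) * indicator A x)"
    by (auto simp: indicator_def fun_eq_iff)
  finally show ?thesis .
qed

lemma nn_integral_atLeast_le_if_integrals_le:
  fixes h :: "real \<Rightarrow> real"
  assumes cont: "continuous_on {a..} h" and nonneg: "\<And>s. a \<le> s \<Longrightarrow> 0 \<le> h s"
    and bound: "\<And>R. a \<le> R \<Longrightarrow> integral {a..R} h \<le> B"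
  shows "(\<integral>\<^sup>+s\<in>{a..}. ennreal (h s) \<partial>lborel) \<le> ennreal B"
proof -
  define g where "g N s = ennreal (h s) * indicator {a..a + real N} s" for N s
  have "incseq g"
    by (auto simp: incseq_def le_fun_def g_def indicator_def)
  moreover have "g N \<in> borel_measurable lborel" for N
    unfolding g_def using cont
    by (auto intro!: borel_measurable_ennreal_indicator_continuous_on elim: continuous_on_subset)
  moreover have "(SUP N. g N s) = ennreal (h s) * indicator {a..} s" for s
  proof (rule antisym)
    show "(SUP N. g N s) \<le> ennreal (h s) * indicator {a..} s"
      by (rule SUP_least) (auto simp: g_def indicator_def)
    obtain N :: nat where "s - a \<le> real N" using real_arch_simple by blast
    then have "g N s = ennreal (h s) * indicator {a..} s" by (auto simp: g_def indicator_def)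
    then show "ennreal (h s) * indicator {a..} s \<le> (SUP N. g N s)"
      by (metis SUP_upper UNIV_I)
  qed
  ultimately have "(\<integral>\<^sup>+s\<in>{a..}. ennreal (h s) \<partial>lborel) = (SUP N. \<integral>\<^sup>+s. g N s \<partial>lborel)"
    using nn_integral_monotone_convergence_SUP[of g lborel] by simp
  also have "\<dots> \<le> ennreal B"
  proof (rule SUP_least)
    fix N :: nat
    have "(\<integral>\<^sup>+s. g N s \<partial>lborel) = ennreal (integral {a..a + real N} h)"
      unfolding g_def using cont nonneg
      by (intro nn_integral_has_integral_lebesgue' integrable_integral integrable_continuous_real)
         (auto elim: continuous_on_subset)
    then show "(\<integral>\<^sup>+s. g N s \<partial>lborel) \<le> ennreal B"
      using bound[of "a + real N"] by (simp add: ennreal_leI)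
  qed
  finally show ?thesis .
qed

lemma integral_le_nn_integral_atLeast:
  fixes g :: "real \<Rightarrow> real"
  assumes cont: "continuous_on {a..} g" and nonneg: "\<And>s. a \<le> s \<Longrightarrow> 0 \<le> g s" and R: "a \<le> R"
  shows "ennreal (integral {a..R} g) \<le> (\<integral>\<^sup>+s\<in>{a..}. ennreal (g s) \<partial>lborel)"
proof -
  have "continuous_on {a..R} g"
    using cont by (rule continuous_on_subset) auto
  then have "ennreal (integral {a..R} g) = (\<integral>\<^sup>+s\<in>{a..R}. ennreal (g s) \<partial>lborel)"
    using nonneg
    by (intro nn_integral_has_integral_lebesgue'[symmetric] integrable_integral integrable_continuous_real) auto
  also have "\<dots> \<le> (\<integral>\<^sup>+s\<in>{a..}. ennreal (g s) \<partial>lborel)"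
    by (intro nn_integral_mono) (auto simp: indicator_def)
  finally show ?thesis .
qed

text \<open>Without the last term, the right-hand side is the derivative of
  \<open>\<rho>\<^bsup>\<Lambda>+1\<^esup> u\<^sup>2 w / (m (\<Lambda>+1))\<close> when \<open>\<rho>' = m\<close>, \<open>u' = d\<close> and the derivative of \<open>w\<close> is \<open>w'\<close>.\<close>
lemma hardy_pointwise:
  fixes \<rho> m \<Lambda> u d w w' P :: real
  assumes \<rho>: "0 < \<rho>" and m: "0 < m" and \<Lambda>: "-1 < \<Lambda>" and w: "0 \<le> w" "0 \<le> w'"
    and d: "\<bar>d\<bar> \<le> m * sqrt P"
  shows "\<rho> powr \<Lambda> * u\<^sup>2 * w / 2
    \<le> \<rho> powr \<Lambda> * u\<^sup>2 * w + \<rho> powr (\<Lambda> + 1) / (m * (\<Lambda> + 1)) * (2 * u * d * w + u\<^sup>2 * w')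
      + 2 / (\<Lambda> + 1)\<^sup>2 * (\<rho> powr (\<Lambda> + 2) * P * w)"
proof -
  define W where "W = \<rho> powr \<Lambda>"
  define S where "S = sqrt P"
  define \<beta> where "\<beta> = 2 / (\<Lambda> + 1)"
  have W: "0 \<le> W" by (simp add: W_def)
  have S: "0 \<le> S" "S\<^sup>2 = P"
    using order_trans[OF abs_ge_zero d] m by (auto simp: S_def zero_le_mult_iff)
  have \<beta>: "0 < \<beta>" using \<Lambda> by (simp add: \<beta>_def)
  have powr1: "\<rho> powr (\<Lambda> + 1) = W * \<rho>" and powr2: "\<rho> powr (\<Lambda> + 2) = W * \<rho>\<^sup>2"
    using \<rho> by (simp_all add: W_def powr_add power2_eq_square)
  have coeff: "\<rho> powr (\<Lambda> + 1) / (m * (\<Lambda> + 1)) = \<beta> / (2 * m) * W * \<rho>"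
  proof -
    have "0 < m * (\<Lambda> + 1)" using m \<Lambda> by simp
    then show ?thesis unfolding powr1 \<beta>_def using m by (simp add: field_simps)
  qed
  have "0 \<le> \<beta> / (2 * m) * W * \<rho> * (u\<^sup>2 * w')"
    using \<beta> m W \<rho> w by simp
  moreover have "- (\<beta> * W * \<rho> * \<bar>u\<bar> * S * w) \<le> \<beta> / (2 * m) * W * \<rho> * (2 * u * d * w)"
  proof -
    have "- (u * d) \<le> \<bar>u\<bar> * (m * S)"
      using d abs_ge_zero[of u] by (metis S_def abs_mult abs_ge_minus_self mult_left_mono order_trans)
    then have "\<beta> / (2 * m) * W * \<rho> * w * (2 * (- (u * d))) \<le> \<beta> / (2 * m) * W * \<rho> * w * (2 * (\<bar>u\<bar> * (m * S)))"
      using \<beta> m W \<rho> w by (intro mult_left_mono) auto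
    then show ?thesis using m by (simp add: field_simps)
  qed
  moreover have "\<beta> * W * \<rho> * \<bar>u\<bar> * S * w \<le> W * u\<^sup>2 * w / 2 + \<beta>\<^sup>2 / 2 * (W * \<rho>\<^sup>2 * S\<^sup>2 * w)"
  proof -
    have "0 \<le> W * w * (\<bar>u\<bar> - \<beta> * \<rho> * S)\<^sup>2"
      using W w by simp
    then show ?thesis by (simp add: power2_eq_square algebra_simps)
  qed
  ultimately have "W * u\<^sup>2 * w / 2 \<le> W * u\<^sup>2 * w + \<beta> / (2 * m) * W * \<rho> * (2 * u * d * w)
      + \<beta> / (2 * m) * W * \<rho> * (u\<^sup>2 * w') + \<beta>\<^sup>2 / 2 * (W * \<rho>\<^sup>2 * S\<^sup>2 * w)"
    by linarith
  moreover have "\<beta>\<^sup>2 / 2 = 2 / (\<Lambda> + 1)\<^sup>2"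
    by (simp add: \<beta>_def power_divide)
  ultimately show ?thesis
    unfolding coeff powr2 S(2)[symmetric] W_def[symmetric] by (simp add: distrib_left mult.assoc)
qed

lemma has_real_derivative_hardy_potential:
  fixes f :: "real \<Rightarrow> real" and k :: nat
  assumes "0 < 1 + m * (s - a)" and m: "0 < m" and \<Lambda>: "-1 < \<Lambda>"
    and f': "(f has_real_derivative f') (at s)"
  shows "((\<lambda>s. (1 + m * (s - a)) powr (\<Lambda> + 1) / (m * (\<Lambda> + 1)) * ((f s)\<^sup>2 * s ^ k)) has_real_derivative
      (1 + m * (s - a)) powr \<Lambda> * ((f s)\<^sup>2 * s ^ k)
      + (2 * f s * f' * s ^ k + (f s)\<^sup>2 * (real k * s ^ (k - 1)))
        * ((1 + m * (s - a)) powr (\<Lambda> + 1) / (m * (\<Lambda> + 1)))) (at s)"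
proof (rule DERIV_mult)
  have "((\<lambda>s. (1 + m * (s - a)) powr (\<Lambda> + 1) / (m * (\<Lambda> + 1))) has_real_derivative
      (\<Lambda> + 1) * (1 + m * (s - a)) powr \<Lambda> * m / (m * (\<Lambda> + 1))) (at s)"
    using assms(1) by (auto intro!: derivative_eq_intros)
  moreover have "(\<Lambda> + 1) * (1 + m * (s - a)) powr \<Lambda> * m / (m * (\<Lambda> + 1)) = (1 + m * (s - a)) powr \<Lambda>"
    using m \<Lambda> by simp
  ultimately show "((\<lambda>s. (1 + m * (s - a)) powr (\<Lambda> + 1) / (m * (\<Lambda> + 1))) has_real_derivative
      (1 + m * (s - a)) powr \<Lambda>) (at s)"
    by simp
  show "((\<lambda>s. (f s)\<^sup>2 * s ^ k) has_real_derivative 2 * f s * f' * s ^ k + (f s)\<^sup>2 * (real k * s ^ (k - 1))) (at s)"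
    using f' by (auto intro!: derivative_eq_intros)
qed

lemma hardy_interval:
  fixes f f' P :: "real \<Rightarrow> real" and k :: nat
  assumes m: "0 < m" and a: "0 \<le> a" and \<Lambda>: "-1 < \<Lambda>" and R: "a \<le> R"
    and f': "\<And>s. s \<in> {a..R} \<Longrightarrow> (f has_real_derivative f' s) (at s)"
    and P: "continuous_on {a..R} P"
    and bound: "\<And>s. s \<in> {a..R} \<Longrightarrow> \<bar>f' s\<bar> \<le> m * sqrt (P s)"
  shows "integral {a..R} (\<lambda>s. (1 + m * (s - a)) powr \<Lambda> * (f s)\<^sup>2 * s ^ k)
    \<le> 2 * (1 + m * (R - a)) / (m * (\<Lambda> + 1)) * ((1 + m * (R - a)) powr \<Lambda> * (f R)\<^sup>2 * R ^ k)
      + 4 / (\<Lambda> + 1)\<^sup>2 * integral {a..R} (\<lambda>s. (1 + m * (s - a)) powr (\<Lambda> + 2) * P s * s ^ k)"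
proof -
  define \<rho> where "\<rho> s = 1 + m * (s - a)" for s
  define h where "h s = \<rho> s powr \<Lambda> * (f s)\<^sup>2 * s ^ k" for s
  define Q where "Q s = \<rho> s powr (\<Lambda> + 2) * P s * s ^ k" for s
  define \<Phi> where "\<Phi> s = \<rho> s powr (\<Lambda> + 1) / (m * (\<Lambda> + 1)) * ((f s)\<^sup>2 * s ^ k)" for s
  define \<Phi>' where "\<Phi>' s = \<rho> s powr \<Lambda> * ((f s)\<^sup>2 * s ^ k)
      + (2 * f s * f' s * s ^ k + (f s)\<^sup>2 * (real k * s ^ (k - 1))) * (\<rho> s powr (\<Lambda> + 1) / (m * (\<Lambda> + 1)))"
    for s
  have \<rho>: "0 < \<rho> s" if "s \<in> {a..R}" for s
    using that m by (simp add: \<rho>_def add_pos_nonneg)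
  have cont_\<rho>: "continuous_on A \<rho>" for A
    unfolding \<rho>_def by (intro continuous_intros)
  have d\<Phi>: "(\<Phi> has_real_derivative \<Phi>' s) (at s)" if s: "s \<in> {a..R}" for s
    unfolding \<Phi>_def[abs_def] \<Phi>'_def \<rho>_def
    using \<rho>[OF s] m \<Lambda> f'[OF s] by (intro has_real_derivative_hardy_potential) (auto simp: \<rho>_def)
  have cont_f: "continuous_on {a..R} f"
    using f' DERIV_isCont by (blast intro: continuous_at_imp_continuous_on)
  have h: "h integrable_on {a..R}" and Q: "Q integrable_on {a..R}"
    unfolding h_def Q_def
    by (auto intro!: integrable_continuous_real continuous_intros cont_f P cont_\<rho> dest: \<rho>)
  have "(\<Phi>' has_integral \<Phi> R - \<Phi> a) {a..R}"
    using R d\<Phi> by (intro fundamental_theorem_of_calculus)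
      (auto simp: has_real_derivative_iff_has_vector_derivative[symmetric] intro: has_field_derivative_at_within)
  then have upper: "((\<lambda>s. \<Phi>' s + 2 / (\<Lambda> + 1)\<^sup>2 * Q s) has_integral
      \<Phi> R - \<Phi> a + 2 / (\<Lambda> + 1)\<^sup>2 * integral {a..R} Q) {a..R}"
    using Q by (intro has_integral_add has_integral_mult_right integrable_integral)
  have "((\<lambda>s. h s / 2) has_integral integral {a..R} h / 2) {a..R}"
    using h by (intro has_integral_divide integrable_integral)
  moreover note upper
  moreover have "h s / 2 \<le> \<Phi>' s + 2 / (\<Lambda> + 1)\<^sup>2 * Q s" if "s \<in> {a..R}" for s
    unfolding h_def Q_def \<Phi>'_def
    using hardy_pointwise[OF \<rho>[OF that] m \<Lambda> _ _ bound[OF that], of "s ^ k" "real k * s ^ (k - 1)" "f s"]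
      that a by (simp add: mult_ac)
  ultimately have "integral {a..R} h / 2 \<le> \<Phi> R - \<Phi> a + 2 / (\<Lambda> + 1)\<^sup>2 * integral {a..R} Q"
    by (rule has_integral_le)
  moreover have "0 \<le> \<Phi> a"
    using m \<Lambda> a by (simp add: \<Phi>_def \<rho>_def)
  moreover have "\<Phi> R = \<rho> R / (m * (\<Lambda> + 1)) * h R"
    using \<rho>[of R] R by (simp add: \<Phi>_def h_def powr_add)
  ultimately show ?thesis
    unfolding h_def Q_def \<rho>_def by (simp add: field_simps)
qed

lemma hardy_half_line_truncated:
  fixes f f' P :: "real \<Rightarrow> real" and k :: nat
  assumes m: "0 < m" and a: "0 < a" and \<Lambda>: "-1 < \<Lambda>"
    and f': "\<And>s. a \<le> s \<Longrightarrow> (f has_real_derivative f' s) (at s)"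
    and P: "continuous_on {a..} P"
    and bound: "\<And>s. a \<le> s \<Longrightarrow> \<bar>f' s\<bar> \<le> m * sqrt (P s)"
    and finite: "(\<integral>\<^sup>+s\<in>{a..}. ennreal ((1 + m * (s - a)) powr \<Lambda> * (f s)\<^sup>2 * s ^ k) \<partial>lborel) < \<infinity>"
    and J: "\<And>R. a \<le> R \<Longrightarrow> integral {a..R} (\<lambda>s. (1 + m * (s - a)) powr (\<Lambda> + 2) * P s * s ^ k) \<le> J"
    and R0: "a \<le> R0"
  shows "integral {a..R0} (\<lambda>s. (1 + m * (s - a)) powr \<Lambda> * (f s)\<^sup>2 * s ^ k) \<le> 4 / (\<Lambda> + 1)\<^sup>2 * J"
proof (rule field_le_epsilon)
  fix e :: real assume e: "0 < e"
  define \<rho> where "\<rho> s = 1 + m * (s - a)" for s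
  define h where "h s = \<rho> s powr \<Lambda> * (f s)\<^sup>2 * s ^ k" for s
  define D where "D = 2 * (1 / a + m) / (m * (\<Lambda> + 1))"
  have D: "0 < D"
  proof -
    have "0 < 1 / a + m" using a m by (simp add: add_pos_pos)
    then show ?thesis using m \<Lambda> by (simp add: D_def)
  qed
  obtain R where R: "R0 \<le> R" "R * h R \<le> e / D"
    using finite_nn_integral_ex_le_inverse[OF a finite, of "e / D" R0] e D
    unfolding h_def \<rho>_def by auto
  have aR: "a \<le> R" using R0 R by simp
  have h_nonneg: "0 \<le> h s" if "a \<le> s" for s
    using that a by (simp add: h_def)
  have \<rho>: "0 < \<rho> s" if "a \<le> s" for s
    using that m by (simp add: \<rho>_def add_pos_nonneg)
  have cont_\<rho>: "continuous_on A \<rho>" for A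
    unfolding \<rho>_def by (intro continuous_intros)
  have "continuous_on {a..} f"
    using f' DERIV_isCont by (blast intro: continuous_at_imp_continuous_on)
  then have "continuous_on {a..R} h"
    unfolding h_def using \<rho> less_irrefl
    by (fastforce intro!: continuous_intros cont_\<rho> elim: continuous_on_subset)
  then have "integral {a..R0} h \<le> integral {a..R} h"
    using R h_nonneg by (intro integral_subset_le integrable_continuous_real) (auto elim: continuous_on_subset)
  also have "\<dots> \<le> 2 * \<rho> R / (m * (\<Lambda> + 1)) * h R
      + 4 / (\<Lambda> + 1)\<^sup>2 * integral {a..R} (\<lambda>s. (1 + m * (s - a)) powr (\<Lambda> + 2) * P s * s ^ k)"
    unfolding h_def \<rho>_def using m a \<Lambda> aR f' bound P
    by (intro hardy_interval) (auto elim: continuous_on_subset)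
  also have "2 * \<rho> R / (m * (\<Lambda> + 1)) * h R \<le> D * (R * h R)"
  proof -
    have "1 \<le> R / a" "0 \<le> m * a" using aR a m by simp_all
    then have "\<rho> R \<le> (1 / a + m) * R"
      by (simp add: \<rho>_def algebra_simps)
    then have "2 * (\<rho> R * h R) / (m * (\<Lambda> + 1)) \<le> 2 * ((1 / a + m) * R * h R) / (m * (\<Lambda> + 1))"
      using m \<Lambda> h_nonneg[OF aR] by (intro divide_right_mono mult_left_mono mult_right_mono) auto
    then show ?thesis
      by (simp add: D_def mult_ac)
  qed
  also have "D * (R * h R) \<le> e"
    using R(2) D by (simp add: field_simps)
  also have "4 / (\<Lambda> + 1)\<^sup>2 * integral {a..R} (\<lambda>s. (1 + m * (s - a)) powr (\<Lambda> + 2) * P s * s ^ k)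
      \<le> 4 / (\<Lambda> + 1)\<^sup>2 * J"
    using J[OF aR] by (intro mult_left_mono) auto
  finally show "integral {a..R0} (\<lambda>s. (1 + m * (s - a)) powr \<Lambda> * (f s)\<^sup>2 * s ^ k) \<le> 4 / (\<Lambda> + 1)\<^sup>2 * J + e"
    unfolding h_def \<rho>_def by simp
qed

lemma nn_integral_weighted_le_of_growth:
  fixes f P :: "real \<Rightarrow> real" and k :: nat
  assumes m: "0 < m" and a: "0 < a" and P: "continuous_on {a..} P"
    and P_nonneg: "\<And>s. a \<le> s \<Longrightarrow> 0 \<le> P s"
    and growth: "\<And>s. a \<le> s \<Longrightarrow> \<bar>f s\<bar> \<le> K * (1 + m * (s - a)) * sqrt (P s)"
  shows "(\<integral>\<^sup>+s\<in>{a..}. ennreal ((1 + m * (s - a)) powr \<Lambda> * (f s)\<^sup>2 * s ^ k) \<partial>lborel)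
    \<le> ennreal (K\<^sup>2) * (\<integral>\<^sup>+s\<in>{a..}. ennreal ((1 + m * (s - a)) powr (\<Lambda> + 2) * P s * s ^ k) \<partial>lborel)"
proof -
  define \<rho> where "\<rho> s = 1 + m * (s - a)" for s
  define Q where "Q s = \<rho> s powr (\<Lambda> + 2) * P s * s ^ k" for s
  have \<rho>: "0 < \<rho> s" if "a \<le> s" for s
    using that m by (simp add: \<rho>_def add_pos_nonneg)
  have "continuous_on {a..} Q"
    unfolding Q_def \<rho>_def using m
    by (auto intro!: continuous_intros P dest: \<rho>[unfolded \<rho>_def])
  then have "(\<lambda>s. ennreal (Q s) * indicator {a..} s) \<in> borel_measurable borel"
    by (intro borel_measurable_ennreal_indicator_continuous_on) auto
  moreover have "ennreal (\<rho> s powr \<Lambda> * (f s)\<^sup>2 * s ^ k) \<le> ennreal (K\<^sup>2) * ennreal (Q s)" if "a \<le> s" for s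
  proof -
    have "(f s)\<^sup>2 \<le> K\<^sup>2 * (\<rho> s)\<^sup>2 * P s"
      using growth[OF that] P_nonneg[OF that] unfolding \<rho>_def
      by (metis abs_le_square_iff abs_ge_zero order_trans abs_of_nonneg power_mult_distrib real_sqrt_pow2)
    then have "\<rho> s powr \<Lambda> * (f s)\<^sup>2 * s ^ k \<le> K\<^sup>2 * Q s"
      using \<rho>[OF that] a that
      by (simp add: Q_def powr_add mult_left_mono mult_right_mono mult_ac)
    then show ?thesis
      using P_nonneg[OF that] a that by (simp add: Q_def ennreal_mult[symmetric] ennreal_leI)
  qed
  ultimately show ?thesis
    unfolding Q_def \<rho>_def
    by (subst nn_integral_cmult[symmetric]) (auto intro!: nn_integral_mono simp: indicator_def)
qed

text \<open>The growth bound only serves to make the left-hand side finite; the constant does not depend on \<open>K\<close>.\<close>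
lemma hardy_half_line:
  fixes f f' P :: "real \<Rightarrow> real" and k :: nat
  assumes m: "0 < m" and a: "0 < a" and \<Lambda>: "-1 < \<Lambda>"
    and f': "\<And>s. a \<le> s \<Longrightarrow> (f has_real_derivative f' s) (at s)"
    and P: "continuous_on {a..} P"
    and bound: "\<And>s. a \<le> s \<Longrightarrow> \<bar>f' s\<bar> \<le> m * sqrt (P s)"
    and growth: "\<And>s. a \<le> s \<Longrightarrow> \<bar>f s\<bar> \<le> K * (1 + m * (s - a)) * sqrt (P s)"
  shows "(\<integral>\<^sup>+s\<in>{a..}. ennreal ((1 + m * (s - a)) powr \<Lambda> * (f s)\<^sup>2 * s ^ k) \<partial>lborel)
    \<le> ennreal (4 / (\<Lambda> + 1)\<^sup>2)
      * (\<integral>\<^sup>+s\<in>{a..}. ennreal ((1 + m * (s - a)) powr (\<Lambda> + 2) * P s * s ^ k) \<partial>lborel)"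
    (is "?H \<le> ennreal ?c * ?J")
proof (cases "?J = \<infinity>")
  case True
  then show ?thesis using \<Lambda> by (simp add: ennreal_mult_top)
next
  case False
  then obtain J where J: "?J = ennreal J" "0 \<le> J"
    by (auto simp: less_top_ennreal top.not_eq_extremum)
  define \<rho> where "\<rho> s = 1 + m * (s - a)" for s
  define h where "h s = \<rho> s powr \<Lambda> * (f s)\<^sup>2 * s ^ k" for s
  have \<rho>: "0 < \<rho> s" if "a \<le> s" for s
    using that m by (simp add: \<rho>_def add_pos_nonneg)
  have P_nonneg: "0 \<le> P s" if "a \<le> s" for s
    using order_trans[OF abs_ge_zero bound[OF that]] m by (simp add: zero_le_mult_iff)
  have "continuous_on {a..} f"
    using f' DERIV_isCont by (blast intro: continuous_at_imp_continuous_on)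
  then have cont_h: "continuous_on {a..} h"
    unfolding h_def \<rho>_def using m by (auto intro!: continuous_intros dest: \<rho>[unfolded \<rho>_def])
  have cont_Q: "continuous_on {a..} (\<lambda>s. \<rho> s powr (\<Lambda> + 2) * P s * s ^ k)"
    unfolding \<rho>_def using m by (auto intro!: continuous_intros P dest: \<rho>[unfolded \<rho>_def])
  have Q_le_J: "integral {a..R} (\<lambda>s. \<rho> s powr (\<Lambda> + 2) * P s * s ^ k) \<le> J" if "a \<le> R" for R
    using integral_le_nn_integral_atLeast[OF cont_Q _ that] P_nonneg a J
    unfolding \<rho>_def by simp
  have "?H \<le> ennreal (K\<^sup>2) * ?J"
    by (rule nn_integral_weighted_le_of_growth[OF m a P P_nonneg growth])
  also have "\<dots> = ennreal (K\<^sup>2 * J)"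
    using J by (simp add: ennreal_mult)
  finally have "?H < \<infinity>"
    unfolding infinity_ennreal_def by (rule le_less_trans[OF _ ennreal_less_top])
  then have "integral {a..R} h \<le> ?c * J" if "a \<le> R" for R
    using hardy_half_line_truncated[OF m a \<Lambda> f' P bound _ Q_le_J[unfolded \<rho>_def] that]
    unfolding h_def \<rho>_def by blast
  moreover have "0 \<le> h s" if "a \<le> s" for s
    using that a by (simp add: h_def)
  ultimately have "?H \<le> ennreal (?c * J)"
    using nn_integral_atLeast_le_if_integrals_le[OF cont_h] unfolding h_def \<rho>_def by blast
  also have "ennreal (?c * J) = ennreal ?c * ?J"
    unfolding J(1) using J(2) by (intro ennreal_mult) auto
  finally show ?thesis .
qed

section \<open>Hardy inequality on exterior domains\<close>

lemma nn_integral_lborel_scaleR: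
  fixes f :: "'a::euclidean_space \<Rightarrow> ennreal"
  assumes [measurable]: "f \<in> borel_measurable borel" and c: "c \<noteq> 0"
  shows "(\<integral>\<^sup>+x. f x \<partial>lborel) = ennreal (\<bar>c\<bar> ^ DIM('a)) * (\<integral>\<^sup>+x. f (c *\<^sub>R x) \<partial>lborel)"
  by (subst lborel_affine[OF c, of 0])
     (simp add: nn_integral_density nn_integral_distr nn_integral_cmult)

lemma nn_integral_scaled_annulus:
  fixes h :: "'a::euclidean_space \<Rightarrow> ennreal"
  assumes [measurable]: "h \<in> borel_measurable borel" and s: "0 < s"
  shows "(\<integral>\<^sup>+y. indicator {y. 1 \<le> norm y \<and> norm y \<le> 2} y * (ennreal (s ^ (DIM('a) - 1)) * h (s *\<^sub>R y)) \<partial>lborel)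
    = ennreal (1 / s) * (\<integral>\<^sup>+x. indicator {x. s \<le> norm x \<and> norm x \<le> 2 * s} x * h x \<partial>lborel)"
proof -
  let ?f = "\<lambda>x::'a. indicator {x. s \<le> norm x \<and> norm x \<le> 2 * s} x * h x"
  have "(\<integral>\<^sup>+y. indicator {y. 1 \<le> norm y \<and> norm y \<le> 2} y * (ennreal (s ^ (DIM('a) - 1)) * h (s *\<^sub>R y)) \<partial>lborel)
      = (\<integral>\<^sup>+y. ennreal (s ^ (DIM('a) - 1)) * ?f (s *\<^sub>R y) \<partial>lborel)"
    using s by (intro nn_integral_cong) (auto simp: indicator_def)
  also have "\<dots> = ennreal (s ^ (DIM('a) - 1)) * (\<integral>\<^sup>+y. ?f (s *\<^sub>R y) \<partial>lborel)"
    by (rule nn_integral_cmult) measurable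
  also have "\<dots> = ennreal (1 / s) * (ennreal (s ^ DIM('a)) * (\<integral>\<^sup>+y. ?f (s *\<^sub>R y) \<partial>lborel))"
  proof -
    have "s ^ DIM('a) = s * s ^ (DIM('a) - 1)"
      using DIM_positive[where 'a='a] by (cases "DIM('a)") simp_all
    then have "ennreal (s ^ (DIM('a) - 1)) = ennreal (1 / s) * ennreal (s ^ DIM('a))"
      using s by (simp add: ennreal_mult[symmetric])
    then show ?thesis by (simp add: mult.assoc)
  qed
  also have "\<dots> = ennreal (1 / s) * (\<integral>\<^sup>+x. ?f x \<partial>lborel)"
    using nn_integral_lborel_scaleR[of ?f s] s by simp
  finally show ?thesis .
qed

text \<open>A substitute for polar coordinates: the rays \<open>s y\<close> with \<open>1 \<le> |y| \<le> 2\<close> reach each \<open>x \<noteq> 0\<close>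
  for \<open>|x|/2 \<le> s \<le> |x|\<close>, with total weight \<open>ln 2\<close> for the measure \<open>ds/s\<close>.\<close>
lemma nn_integral_annulus_rays:
  fixes h :: "'a::euclidean_space \<Rightarrow> ennreal"
  assumes [measurable]: "h \<in> borel_measurable borel"
  shows "(\<integral>\<^sup>+y. indicator {y. 1 \<le> norm y \<and> norm y \<le> 2} y *
      (\<integral>\<^sup>+s\<in>{0<..}. ennreal (s ^ (DIM('a) - 1)) * h (s *\<^sub>R y) \<partial>lborel) \<partial>lborel)
    = ennreal (ln 2) * (\<integral>\<^sup>+x. h x \<partial>lborel)"
proof -
  let ?A = "{y::'a. 1 \<le> norm y \<and> norm y \<le> 2}"
  let ?B = "\<lambda>s. {x::'a. s \<le> norm x \<and> norm x \<le> 2 * s}"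
  have "(\<integral>\<^sup>+y. indicator ?A y * (\<integral>\<^sup>+s\<in>{0<..}. ennreal (s ^ (DIM('a) - 1)) * h (s *\<^sub>R y) \<partial>lborel) \<partial>lborel)
    = (\<integral>\<^sup>+s. (\<integral>\<^sup>+y. indicator {0<..} s * (indicator ?A y * (ennreal (s ^ (DIM('a) - 1)) * h (s *\<^sub>R y))) \<partial>lborel) \<partial>lborel)"
    by (subst lborel_pair.Fubini')
       (auto simp: case_prod_unfold nn_integral_cmult[symmetric] mult_ac intro!: nn_integral_cong)
  also have "\<dots> = (\<integral>\<^sup>+s. (\<integral>\<^sup>+x. indicator {0<..} s * ennreal (1 / s) * (indicator (?B s) x * h x) \<partial>lborel) \<partial>lborel)"
  proof (rule nn_integral_cong)
    fix s :: real
    show "(\<integral>\<^sup>+y. indicator {0<..} s * (indicator ?A y * (ennreal (s ^ (DIM('a) - 1)) * h (s *\<^sub>R y))) \<partial>lborel)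
      = (\<integral>\<^sup>+x. indicator {0<..} s * ennreal (1 / s) * (indicator (?B s) x * h x) \<partial>lborel)"
    proof (cases "0 < s")
      case True
      have [measurable]: "(\<lambda>x. indicator (?B s) x * h x) \<in> borel_measurable borel"
        by measurable
      show ?thesis
        using nn_integral_scaled_annulus[OF assms True] True by (simp add: nn_integral_cmult mult.assoc)
    qed simp
  qed
  also have "\<dots> = (\<integral>\<^sup>+x. (\<integral>\<^sup>+s. indicator {0<..} s * ennreal (1 / s) * (indicator (?B s) x * h x) \<partial>lborel) \<partial>lborel)"
    by (subst lborel_pair.Fubini') (auto simp: case_prod_unfold)
  also have "\<dots> = (\<integral>\<^sup>+x. ennreal (ln 2) * h x \<partial>lborel)"
  proof (intro nn_integral_cong_AE eventually_mono[OF AE_lborel_singleton[of 0]])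
    fix x :: 'a assume x: "x \<noteq> 0"
    have "((\<lambda>s. 1 / s) has_integral ln 2) {norm x / 2..norm x}"
      using has_integral_inverse_real[of "norm x / 2" "norm x"] x by (simp add: ln_div)
    then have "(\<integral>\<^sup>+s\<in>{norm x / 2..norm x}. ennreal (1 / s) \<partial>lborel) = ennreal (ln 2)"
      using x by (intro nn_integral_has_integral_lebesgue') auto
    moreover have "indicator {0<..} s * ennreal (1 / s) * (indicator (?B s) x * h x)
        = ennreal (1 / s) * indicator {norm x / 2..norm x} s * h x" for s
      using x by (auto simp: indicator_def)
    ultimately show "(\<integral>\<^sup>+s. indicator {0<..} s * ennreal (1 / s) * (indicator (?B s) x * h x) \<partial>lborel)
      = ennreal (ln 2) * h x"
      by (simp add: nn_integral_multc)
  qed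
  also have "\<dots> = ennreal (ln 2) * (\<integral>\<^sup>+x. h x \<partial>lborel)"
    by (simp add: nn_integral_cmult)
  finally show ?thesis .
qed

lemma has_real_derivative_along_ray:
  assumes "(g has_derivative g') (at (s *\<^sub>R y))"
  shows "((\<lambda>s. g (s *\<^sub>R y)) has_real_derivative g' y) (at s)"
proof -
  have "((\<lambda>s. s *\<^sub>R y) has_derivative (\<lambda>h. h *\<^sub>R y)) (at s)"
    by (auto intro!: derivative_eq_intros)
  from has_derivative_compose[OF this assms] have "((\<lambda>s. g (s *\<^sub>R y)) has_derivative (\<lambda>h. h * g' y)) (at s)"
    using linear_scale[OF has_derivative_linear[OF assms]] by simp
  moreover have "(\<lambda>h. h * g' y) = (*) (g' y)"
    by (simp add: fun_eq_iff mult.commute)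
  ultimately show ?thesis
    by (simp add: has_field_derivative_def)
qed

lemma ray_exterior_integrand:
  fixes y :: "'a::real_normed_vector"
  assumes y: "y \<noteq> 0" and R0: "0 < R0"
  shows "ennreal (s ^ k) * (ennreal ((1 + norm (s *\<^sub>R y) - R0) powr L * v (s *\<^sub>R y))
      * indicator {x. R0 \<le> norm x} (s *\<^sub>R y)) * indicator {0<..} s
    = ennreal ((1 + norm y * (s - R0 / norm y)) powr L * v (s *\<^sub>R y) * s ^ k) * indicator {R0 / norm y..} s"
proof (cases "0 < s")
  case True
  have "R0 \<le> norm (s *\<^sub>R y) \<longleftrightarrow> R0 / norm y \<le> s"
    using True y by (simp add: field_simps)
  moreover have weight: "1 + norm (s *\<^sub>R y) - R0 = 1 + norm y * (s - R0 / norm y)"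
    using True y by (simp add: field_simps)
  ultimately show ?thesis
    using True unfolding weight indicator_def by (simp add: ennreal_mult'[symmetric] mult.commute)
next
  case False
  moreover have "0 < R0 / norm y" using y R0 by simp
  ultimately show ?thesis by (simp add: indicator_def)
qed

lemma hardy_ray:
  fixes g P :: "'a::euclidean_space \<Rightarrow> real" and y :: 'a
  assumes \<Lambda>: "-1 < \<Lambda>" and R0: "0 < R0" and y: "y \<noteq> 0"
    and g: "\<And>x. (g has_derivative g' x) (at x)"
    and P: "continuous_on UNIV P"
    and radial: "\<And>x. R0 \<le> norm x \<Longrightarrow> \<bar>g' x x\<bar> \<le> norm x * sqrt (P x)"
    and growth: "\<And>x. R0 \<le> norm x \<Longrightarrow> \<bar>g x\<bar> \<le> K * (1 + norm x - R0) * sqrt (P x)"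
  shows "(\<integral>\<^sup>+s\<in>{0<..}. ennreal (s ^ k) * (ennreal ((1 + norm (s *\<^sub>R y) - R0) powr \<Lambda> * (g (s *\<^sub>R y))\<^sup>2)
            * indicator {x. R0 \<le> norm x} (s *\<^sub>R y)) \<partial>lborel)
    \<le> ennreal (4 / (\<Lambda> + 1)\<^sup>2) * (\<integral>\<^sup>+s\<in>{0<..}. ennreal (s ^ k)
        * (ennreal ((1 + norm (s *\<^sub>R y) - R0) powr (\<Lambda> + 2) * P (s *\<^sub>R y))
            * indicator {x. R0 \<le> norm x} (s *\<^sub>R y)) \<partial>lborel)"
proof -
  define m where "m = norm y"
  define a where "a = R0 / m"
  have m: "0 < m" and a: "0 < a" using y R0 by (simp_all add: m_def a_def)
  have norm_ray: "norm (s *\<^sub>R y) = m * s" if "a \<le> s" for s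
    using that a by (simp add: m_def)
  have on_ray: "R0 \<le> norm (s *\<^sub>R y)" and weight: "1 + norm (s *\<^sub>R y) - R0 = 1 + m * (s - a)"
    if "a \<le> s" for s
    using that m unfolding norm_ray[OF that] by (simp_all add: a_def field_simps)
  have "(\<integral>\<^sup>+s\<in>{a..}. ennreal ((1 + m * (s - a)) powr \<Lambda> * (g (s *\<^sub>R y))\<^sup>2 * s ^ k) \<partial>lborel)
      \<le> ennreal (4 / (\<Lambda> + 1)\<^sup>2)
        * (\<integral>\<^sup>+s\<in>{a..}. ennreal ((1 + m * (s - a)) powr (\<Lambda> + 2) * P (s *\<^sub>R y) * s ^ k) \<partial>lborel)"
  proof (rule hardy_half_line[OF m a \<Lambda>])
    show "((\<lambda>s. g (s *\<^sub>R y)) has_real_derivative g' (s *\<^sub>R y) y) (at s)" for s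
      by (rule has_real_derivative_along_ray[OF g])
    show "continuous_on {a..} (\<lambda>s. P (s *\<^sub>R y))"
      by (intro continuous_on_compose2[OF P] continuous_intros) auto
    fix s assume s: "a \<le> s"
    then have "0 < s" using a by simp
    have "s * \<bar>g' (s *\<^sub>R y) y\<bar> = \<bar>g' (s *\<^sub>R y) (s *\<^sub>R y)\<bar>"
      using \<open>0 < s\<close> linear_scale[OF has_derivative_linear[OF g]] by (simp add: abs_mult)
    also have "\<dots> \<le> s * (m * sqrt (P (s *\<^sub>R y)))"
      using radial[OF on_ray[OF s]] \<open>0 < s\<close> by (simp add: m_def mult_ac)
    finally show "\<bar>g' (s *\<^sub>R y) y\<bar> \<le> m * sqrt (P (s *\<^sub>R y))"
      using \<open>0 < s\<close> by simp
    show "\<bar>g (s *\<^sub>R y)\<bar> \<le> K * (1 + m * (s - a)) * sqrt (P (s *\<^sub>R y))"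
      using growth[OF on_ray[OF s]] unfolding weight[OF s] .
  qed
  then show ?thesis
    unfolding ray_exterior_integrand[OF y R0, where L = \<Lambda> and v = "\<lambda>x. (g x)\<^sup>2"]
      ray_exterior_integrand[OF y R0, where L = "\<Lambda> + 2" and v = P]
    by (simp only: m_def a_def)
qed

lemma hardy_exterior:
  fixes g P :: "'a::euclidean_space \<Rightarrow> real"
  assumes \<Lambda>: "-1 < \<Lambda>" and R0: "0 < R0"
    and g: "\<And>x. (g has_derivative g' x) (at x)"
    and P: "continuous_on UNIV P"
    and radial: "\<And>x. R0 \<le> norm x \<Longrightarrow> \<bar>g' x x\<bar> \<le> norm x * sqrt (P x)"
    and growth: "\<And>x. R0 \<le> norm x \<Longrightarrow> \<bar>g x\<bar> \<le> K * (1 + norm x - R0) * sqrt (P x)"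
  shows "(\<integral>\<^sup>+x\<in>{x. R0 \<le> norm x}. ennreal ((1 + norm x - R0) powr \<Lambda> * (g x)\<^sup>2) \<partial>lborel)
    \<le> ennreal (4 / (\<Lambda> + 1)\<^sup>2)
      * (\<integral>\<^sup>+x\<in>{x. R0 \<le> norm x}. ennreal ((1 + norm x - R0) powr (\<Lambda> + 2) * P x) \<partial>lborel)"
    (is "?L \<le> ennreal ?c * ?R")
proof -
  define E where "E = {x::'a. R0 \<le> norm x}"
  define A where "A = {y::'a. 1 \<le> norm y \<and> norm y \<le> 2}"
  define hL where "hL x = ennreal ((1 + norm x - R0) powr \<Lambda> * (g x)\<^sup>2) * indicator E x" for x
  define hR where "hR x = ennreal ((1 + norm x - R0) powr (\<Lambda> + 2) * P x) * indicator E x" for x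
  define ray where "ray h y = (\<integral>\<^sup>+s\<in>{0<..}. ennreal (s ^ (DIM('a) - 1)) * h (s *\<^sub>R y) \<partial>lborel)"
    for h :: "'a \<Rightarrow> ennreal" and y
  have "continuous_on UNIV g"
    using g has_derivative_continuous by (blast intro: continuous_at_imp_continuous_on)
  then have [measurable]: "g \<in> borel_measurable borel" "P \<in> borel_measurable borel"
    using P by (simp_all add: borel_measurable_continuous_onI)
  have [measurable]: "E \<in> sets borel" "A \<in> sets borel"
    unfolding E_def A_def by measurable
  have [measurable]: "hL \<in> borel_measurable borel" "hR \<in> borel_measurable borel"
    unfolding hL_def[abs_def] hR_def[abs_def] by measurable
  have "ennreal (ln 2) * ?L = (\<integral>\<^sup>+y. indicator A y * ray hL y \<partial>lborel)"
    using nn_integral_annulus_rays[of hL] unfolding ray_def A_def hL_def E_def by simp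
  also have "\<dots> \<le> (\<integral>\<^sup>+y. ennreal ?c * (indicator A y * ray hR y) \<partial>lborel)"
  proof (rule nn_integral_mono)
    fix y
    show "indicator A y * ray hL y \<le> ennreal ?c * (indicator A y * ray hR y)"
    proof (cases "y \<in> A")
      case True
      then have "y \<noteq> 0" by (auto simp: A_def)
      from hardy_ray[OF \<Lambda> R0 this g P radial growth, of "DIM('a) - 1"] True
      show ?thesis unfolding ray_def hL_def hR_def E_def by simp
    qed simp
  qed
  also have "\<dots> = ennreal ?c * (\<integral>\<^sup>+y. indicator A y * ray hR y \<partial>lborel)"
    by (rule nn_integral_cmult) (simp add: ray_def)
  also have "\<dots> = ennreal (ln 2) * (ennreal ?c * ?R)"
    using nn_integral_annulus_rays[of hR] unfolding ray_def A_def hR_def E_def by (simp add: mult_ac)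
  finally show ?thesis
    by (simp add: ennreal_mult_le_mult_iff)
qed

section \<open>Regularity of the vector fields\<close>

definition C1 :: "'n::finite stfun \<Rightarrow> bool" where
  "C1 F \<longleftrightarrow> (\<forall>p. F differentiable at p) \<and> (\<forall>u. continuous_on UNIV (pd F u))"

lemma pd_has_derivative: "F differentiable at p \<Longrightarrow> (F has_derivative (\<lambda>u. pd F u p)) (at p)"
  unfolding pd_def using frechet_derivative_works by auto

lemma pd_eq: "(F has_derivative F') (at p) \<Longrightarrow> pd F u p = F' u"
  unfolding pd_def by (metis frechet_derivative_at)

lemma C1I:
  assumes "\<And>p. (F has_derivative F' p) (at p)" and "\<And>u. continuous_on UNIV (\<lambda>p. F' p u)"
  shows "C1 F"
proof -
  have "pd F u = (\<lambda>p. F' p u)" for u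
    using pd_eq[OF assms(1)] by (simp add: fun_eq_iff)
  moreover have "F differentiable at p" for p
    using assms(1) by (rule differentiableI)
  ultimately show ?thesis
    using assms(2) unfolding C1_def by simp
qed

lemma C1_continuous_on:
  assumes "C1 F"
  shows "continuous_on UNIV F"
proof (rule continuous_at_imp_continuous_on, rule ballI)
  fix p
  have "F differentiable at p" using assms unfolding C1_def by blast
  then show "isCont F p" by (rule differentiable_imp_continuous_within)
qed

lemma C1_bounded_linear:
  assumes "bounded_linear l"
  shows "C1 l"
proof (rule C1I)
  show "(l has_derivative l) (at p)" for p
    using assms by (rule bounded_linear_imp_has_derivative)
qed simp

lemma C1_add:
  assumes F: "C1 F" and G: "C1 G"
  shows "C1 (\<lambda>p. F p + G p)"
proof (rule C1I)
  show "((\<lambda>p. F p + G p) has_derivative (\<lambda>u. pd F u p + pd G u p)) (at p)" for p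
    using F G unfolding C1_def by (intro has_derivative_add pd_has_derivative) blast+
  show "continuous_on UNIV (\<lambda>p. pd F u p + pd G u p)" for u
    using F G unfolding C1_def by (intro continuous_on_add) blast+
qed

lemma C1_diff:
  assumes F: "C1 F" and G: "C1 G"
  shows "C1 (\<lambda>p. F p - G p)"
proof (rule C1I)
  show "((\<lambda>p. F p - G p) has_derivative (\<lambda>u. pd F u p - pd G u p)) (at p)" for p
    using F G unfolding C1_def by (intro has_derivative_diff pd_has_derivative) blast+
  show "continuous_on UNIV (\<lambda>p. pd F u p - pd G u p)" for u
    using F G unfolding C1_def by (intro continuous_on_diff) blast+
qed

lemma C1_mult:
  assumes F: "C1 F" and G: "C1 G"
  shows "C1 (\<lambda>p. F p * G p)"
proof (rule C1I)
  show "((\<lambda>p. F p * G p) has_derivative (\<lambda>u. F p * pd G u p + pd F u p * G p)) (at p)" for p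
    using F G unfolding C1_def by (intro has_derivative_mult pd_has_derivative) blast+
  show "continuous_on UNIV (\<lambda>p. F p * pd G u p + pd F u p * G p)" for u
    using F G C1_continuous_on[OF F] C1_continuous_on[OF G] unfolding C1_def
    by (intro continuous_on_add continuous_on_mult) blast+
qed

lemma C2_imp_C1_pd: "C2 w \<Longrightarrow> C1 (pd w v)"
  unfolding C2_def C1_def by blast

lemma C2_imp_C1: "C2 w \<Longrightarrow> C1 w"
  unfolding C1_def using C1_continuous_on[OF C2_imp_C1_pd] by (auto simp: C2_def)

lemma C1_time: "C1 fst"
  by (intro C1_bounded_linear bounded_linear_fst)

lemma C1_space_coordinate: "C1 (\<lambda>p. snd p $ a)"
  by (intro C1_bounded_linear bounded_linear_compose[OF bounded_linear_vec_nth bounded_linear_snd])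

lemma C1_Lb:
  assumes w: "C2 w"
  shows "C1 (Lb a w)"
proof -
  have "Lb a w = (\<lambda>p. snd p $ a * pd w (1, 0) p + fst p * pd w (0, axis a 1) p)"
    by (auto simp: Lb_def dt_def dx_def fun_eq_iff)
  moreover have "C1 (\<lambda>p. snd p $ a * pd w (1, 0) p + fst p * pd w (0, axis a 1) p)"
    by (intro C1_add C1_mult C1_time C1_space_coordinate C2_imp_C1_pd[OF w])
  ultimately show ?thesis by simp
qed

lemma C1_Om:
  assumes w: "C2 w"
  shows "C1 (Om a b w)"
proof -
  have "Om a b w = (\<lambda>p. snd p $ a * pd w (0, axis b 1) p - snd p $ b * pd w (0, axis a 1) p)"
    by (auto simp: Om_def dx_def fun_eq_iff)
  moreover have "C1 (\<lambda>p. snd p $ a * pd w (0, axis b 1) p - snd p $ b * pd w (0, axis a 1) p)"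
    by (intro C1_diff C1_mult C1_space_coordinate C2_imp_C1_pd[OF w])
  ultimately show ?thesis by simp
qed

lemma continuous_on_gradsq:
  assumes "C1 F"
  shows "continuous_on UNIV (gradsq F)"
proof -
  have "continuous_on UNIV (pd F u)" for u
    using assms unfolding C1_def by blast
  then show ?thesis
    unfolding gradsq_def[abs_def] dt_def dx_def
    by (intro continuous_on_add continuous_on_power continuous_on_sum)
qed

lemma continuous_on_gradZsq:
  fixes w :: "('n::{finite,linorder}) stfun"
  assumes w: "C2 w"
  shows "continuous_on UNIV (gradZsq w)"
proof -
  have "continuous_on UNIV (\<lambda>p. case ab of (a, b) \<Rightarrow> gradsq (Om a b w) p)" for ab :: "'n \<times> 'n"
    by (cases ab) (simp add: continuous_on_gradsq C1_Om w)
  then show ?thesis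
    unfolding gradZsq_def[abs_def]
    by (intro continuous_intros continuous_on_gradsq C2_imp_C1 C1_Lb w)
qed

section \<open>The inequalities on \<open>\<Sigma>\<^sup>e\<^sup>x\<^sub>t\<close>\<close>

lemma has_derivative_slice:
  assumes "F differentiable at (t, x)"
  shows "((\<lambda>x. F (t, x)) has_derivative (\<lambda>u. pd F (0, u) (t, x))) (at x)"
proof -
  have "((\<lambda>x. (t, x)) has_derivative (\<lambda>u. (0, u))) (at x)"
    by (auto intro!: derivative_eq_intros)
  from has_derivative_compose[OF this pd_has_derivative[OF assms]] show ?thesis
    by simp
qed

lemma pd_space_eq_sum:
  fixes F :: "'n::finite stfun"
  assumes "F differentiable at p"
  shows "pd F (0, y) p = (\<Sum>b\<in>UNIV. y $ b * dx b F p)"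
proof -
  have lin: "linear (\<lambda>u. pd F u p)"
    by (rule has_derivative_linear[OF pd_has_derivative[OF assms]])
  have scale: "pd F (0, c *\<^sub>R v) p = c * pd F (0, v) p" for c and v :: "real^'n"
    using linear_scale[OF lin, of c "(0, v)"] by simp
  have "(0, y) = (\<Sum>b\<in>UNIV. ((0::real), y $ b *\<^sub>R axis b (1::real)))"
    using basis_expansion[of y] by (simp add: prod_eq_iff fst_sum snd_sum scalar_mult_eq_scaleR)
  then have "pd F (0, y) p = (\<Sum>b\<in>UNIV. pd F (0, y $ b *\<^sub>R axis b 1) p)"
    by (simp only: linear_sum[OF lin])
  then show ?thesis
    by (simp add: scale dx_def)
qed

lemma gradsq_nonneg: "0 \<le> gradsq F p"
  unfolding gradsq_def by (simp add: sum_nonneg)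

lemma abs_dt_le: "\<bar>dt F p\<bar> \<le> sqrt (gradsq F p)"
  by (rule real_le_rsqrt) (simp add: gradsq_def sum_nonneg)

lemma abs_dx_le: "\<bar>dx a F p\<bar> \<le> sqrt (gradsq F p)"
proof (rule real_le_rsqrt)
  have "(dx a F p)\<^sup>2 \<le> (\<Sum>b\<in>UNIV. (dx b F p)\<^sup>2)"
    by (rule member_le_sum) auto
  then show "\<bar>dx a F p\<bar>\<^sup>2 \<le> gradsq F p"
    unfolding gradsq_def by (simp add: add_increasing)
qed

lemma abs_pd_space_le:
  fixes F :: "'n::finite stfun"
  assumes "F differentiable at p"
  shows "\<bar>pd F (0, y) p\<bar> \<le> norm y * sqrt (gradsq F p)"
proof -
  define d :: "real^'n" where "d = (\<chi> b. dx b F p)"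
  have "\<bar>pd F (0, y) p\<bar> = \<bar>y \<bullet> d\<bar>"
    using pd_space_eq_sum[OF assms] by (simp add: d_def inner_vec_def)
  also have "\<dots> \<le> norm y * norm d"
    by (rule Cauchy_Schwarz_ineq2)
  also have "norm d \<le> sqrt (gradsq F p)"
    unfolding norm_vec_def L2_set_def d_def gradsq_def by (intro real_sqrt_le_mono) simp
  then have "norm y * norm d \<le> norm y * sqrt (gradsq F p)"
    by (simp add: mult_left_mono)
  finally show ?thesis .
qed

lemma abs_Lb_le: "\<bar>Lb a w (t, x)\<bar> \<le> (norm x + \<bar>t\<bar>) * sqrt (gradsq w (t, x))"
proof -
  have "\<bar>Lb a w (t, x)\<bar> \<le> \<bar>x $ a\<bar> * \<bar>dt w (t, x)\<bar> + \<bar>t\<bar> * \<bar>dx a w (t, x)\<bar>"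
    unfolding Lb_def using abs_triangle_ineq[of "x $ a * dt w (t, x)" "t * dx a w (t, x)"]
    by (simp add: abs_mult)
  also have "\<dots> \<le> norm x * sqrt (gradsq w (t, x)) + \<bar>t\<bar> * sqrt (gradsq w (t, x))"
    by (intro add_mono mult_mono component_le_norm_cart abs_dt_le abs_dx_le) auto
  finally show ?thesis
    by (simp add: algebra_simps)
qed

lemma abs_Om_le: "\<bar>Om a b w (t, x)\<bar> \<le> 2 * norm x * sqrt (gradsq w (t, x))"
proof -
  have "\<bar>Om a b w (t, x)\<bar> \<le> \<bar>x $ a\<bar> * \<bar>dx b w (t, x)\<bar> + \<bar>x $ b\<bar> * \<bar>dx a w (t, x)\<bar>"
    unfolding Om_def using abs_triangle_ineq4[of "x $ a * dx b w (t, x)" "x $ b * dx a w (t, x)"]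
    by (simp add: abs_mult)
  also have "\<dots> \<le> norm x * sqrt (gradsq w (t, x)) + norm x * sqrt (gradsq w (t, x))"
    by (intro add_mono mult_mono component_le_norm_cart abs_dx_le) auto
  finally show ?thesis
    by simp
qed

lemma norm_plus_time_le_weight:
  fixes x :: "'a::real_normed_vector"
  assumes "1 \<le> t" and "t - 1 \<le> norm x"
  shows "norm x + t \<le> 2 * t * (2 + norm x - t)"
proof -
  have "0 \<le> (2 * t - 1) * (norm x - (t - 1))"
    using assms by simp
  then show ?thesis
    by (simp add: algebra_simps)
qed

lemma gradsq_le_gradZsq: "gradsq w p \<le> gradZsq (w :: ('n::{finite,linorder}) stfun) p"
  unfolding gradZsq_def
  by (intro add_increasing2 sum_nonneg) (auto simp: gradsq_nonneg split: prod.split)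

lemma gradsq_Lb_le_gradZsq: "gradsq (Lb a w) p \<le> gradZsq (w :: ('n::{finite,linorder}) stfun) p"
proof -
  have "gradsq (Lb a w) p \<le> (\<Sum>a\<in>UNIV. gradsq (Lb a w) p)"
    by (rule member_le_sum) (auto simp: gradsq_nonneg)
  moreover have "0 \<le> (\<Sum>(a, b)\<in>{(a, b). a < b}. gradsq (Om a b w) p)"
    by (intro sum_nonneg) (auto simp: gradsq_nonneg split: prod.split)
  ultimately show ?thesis
    unfolding gradZsq_def using gradsq_nonneg[of w p] by linarith
qed

lemma gradsq_Om_le_gradZsq:
  assumes "a < b"
  shows "gradsq (Om a b w) p \<le> gradZsq (w :: ('n::{finite,linorder}) stfun) p"
proof -
  have "gradsq (Om a b w) p \<le> (\<Sum>(a, b)\<in>{(a, b). a < b}. gradsq (Om a b w) p)"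
    using member_le_sum[of "(a, b)" "{(a, b). a < b}" "\<lambda>(a, b). gradsq (Om a b w) p"] assms
    by (auto simp: gradsq_nonneg split: prod.split)
  moreover have "0 \<le> (\<Sum>a\<in>UNIV. gradsq (Lb a w) p)"
    by (intro sum_nonneg) (auto simp: gradsq_nonneg)
  ultimately show ?thesis
    unfolding gradZsq_def using gradsq_nonneg[of w p] by linarith
qed

lemma wint_hardy:
  fixes F P :: "'n::finite stfun"
  assumes \<Lambda>: "-1 < \<Lambda>" and t: "1 < t"
    and F: "\<And>p. F differentiable at p" and P: "continuous_on UNIV P"
    and gradsq_le: "\<And>x. gradsq F (t, x) \<le> P (t, x)"
    and growth: "\<And>x. t - 1 \<le> norm x \<Longrightarrow> \<bar>F (t, x)\<bar> \<le> K * (2 + norm x - t) * sqrt (P (t, x))"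
  shows "wint \<Lambda> t (\<lambda>p. (F p)\<^sup>2) \<le> ennreal (4 / (\<Lambda> + 1)\<^sup>2) * wint (\<Lambda> + 2) t P"
proof -
  have "(\<integral>\<^sup>+x\<in>{x. t - 1 \<le> norm x}. ennreal ((1 + norm x - (t - 1)) powr \<Lambda> * (F (t, x))\<^sup>2) \<partial>lborel)
      \<le> ennreal (4 / (\<Lambda> + 1)\<^sup>2)
        * (\<integral>\<^sup>+x\<in>{x. t - 1 \<le> norm x}. ennreal ((1 + norm x - (t - 1)) powr (\<Lambda> + 2) * P (t, x)) \<partial>lborel)"
  proof (rule hardy_exterior[OF \<Lambda>])
    show "0 < t - 1" using t by simp
    show "((\<lambda>x. F (t, x)) has_derivative (\<lambda>u. pd F (0, u) (t, x))) (at x)" for x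
      using F by (rule has_derivative_slice)
    show "continuous_on UNIV (\<lambda>x. P (t, x))"
      by (intro continuous_on_compose2[OF P] continuous_intros) auto
    show "\<bar>pd F (0, x) (t, x)\<bar> \<le> norm x * sqrt (P (t, x))" for x
      using abs_pd_space_le[OF F, of x "(t, x)"] real_sqrt_le_mono[OF gradsq_le[of x]]
      by (meson mult_left_mono norm_ge_zero order_trans)
    show "\<bar>F (t, x)\<bar> \<le> K * (1 + norm x - (t - 1)) * sqrt (P (t, x))" if "t - 1 \<le> norm x" for x
      using growth[OF that] by (simp add: algebra_simps)
  qed
  moreover have "1 + norm x - (t - 1) = 2 + norm x - t" for x :: "real^'n"
    by simp
  ultimately show ?thesis
    unfolding wint_def Sigma_ex_def by simp
qed

lemma Sigma_ex_borel [measurable]: "Sigma_ex t \<in> sets borel"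
  unfolding Sigma_ex_def by measurable

lemma borel_measurable_slice:
  assumes "continuous_on UNIV F"
  shows "(\<lambda>x. F (t, x)) \<in> borel_measurable borel"
proof (rule borel_measurable_continuous_onI)
  show "continuous_on UNIV (\<lambda>x. F (t, x))"
    by (rule continuous_on_compose2[OF assms, of UNIV "\<lambda>x. (t, x)"]) (auto intro!: continuous_intros)
qed

lemma wint_mono:
  assumes "\<And>x. t - 1 \<le> norm x \<Longrightarrow> f (t, x) \<le> g (t, x)"
  shows "wint \<Lambda> t f \<le> wint \<Lambda> t g"
  unfolding wint_def Sigma_ex_def using assms
  by (intro nn_integral_mono) (auto simp: indicator_def intro!: ennreal_leI mult_left_mono)

lemma wint_shift_weight:
  fixes f :: "'n::finite stfun"
  shows "wint (\<Lambda> + 2) t f = wint \<Lambda> t (\<lambda>p. (2 + norm (snd p) - fst p)\<^sup>2 * f p)"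
  unfolding wint_def
proof (intro nn_integral_cong)
  fix x :: "real^'n"
  show "ennreal ((2 + norm x - t) powr (\<Lambda> + 2) * f (t, x)) * indicator (Sigma_ex t) x
    = ennreal ((2 + norm x - t) powr \<Lambda> * ((2 + norm (snd (t, x)) - fst (t, x))\<^sup>2 * f (t, x))) * indicator (Sigma_ex t) x"
  proof (cases "x \<in> Sigma_ex t")
    case True
    then have "0 < 2 + norm x - t" by (simp add: Sigma_ex_def)
    then show ?thesis by (simp add: powr_add mult_ac)
  qed simp
qed

lemma wint_cmult:
  assumes [measurable]: "(\<lambda>x. f (t, x)) \<in> borel_measurable borel" and c: "0 \<le> c"
  shows "wint \<Lambda> t (\<lambda>p. c * f p) = ennreal c * wint \<Lambda> t f"
  unfolding wint_def using c
  by (subst nn_integral_cmult[symmetric]) (auto simp: ennreal_mult' mult_ac)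

lemma wint_add:
  assumes [measurable]: "(\<lambda>x. f (t, x)) \<in> borel_measurable borel" "(\<lambda>x. g (t, x)) \<in> borel_measurable borel"
    and "\<And>x. 0 \<le> f (t, x)" "\<And>x. 0 \<le> g (t, x)"
  shows "wint \<Lambda> t (\<lambda>p. f p + g p) = wint \<Lambda> t f + wint \<Lambda> t g"
  unfolding wint_def using assms(3,4)
  by (subst nn_integral_add[symmetric]) (auto simp: distrib_left distrib_right intro!: nn_integral_cong)

lemma wint_sum:
  assumes "finite I"
    and "\<And>i. (\<lambda>x. f i (t, x)) \<in> borel_measurable borel" and "\<And>i x. 0 \<le> f i (t, x)"
  shows "wint \<Lambda> t (\<lambda>p. \<Sum>i\<in>I. f i p) = (\<Sum>i\<in>I. wint \<Lambda> t (f i))"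
  using assms(1)
proof (induction I rule: finite_induct)
  case empty
  then show ?case by (simp add: wint_def)
next
  case (insert i I)
  then show ?case
    using assms(2,3) by (simp add: wint_add sum_nonneg)
qed

lemma abs_scaling_le_boosts:
  fixes x v :: "'a::real_inner"
  assumes t: "2 \<le> t" and x: "t - 1 \<le> norm x"
  shows "\<bar>t * D + x \<bullet> v\<bar> \<le> 2 * norm (D *\<^sub>R x + t *\<^sub>R v) + 3 * (2 + norm x - t) * norm v"
proof -
  define R where "R = norm x"
  define \<rho> where "\<rho> = 2 + R - t"
  define l where "l = D *\<^sub>R x + t *\<^sub>R v"
  have R: "1 \<le> R" "t \<le> 2 * R" and \<rho>: "1 \<le> \<rho>" "\<bar>R - t\<bar> \<le> \<rho>"
    using t x by (auto simp: R_def \<rho>_def)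
  have "x \<bullet> l = D * R\<^sup>2 + t * (x \<bullet> v)"
    by (simp add: l_def R_def inner_add_right power2_norm_eq_inner)
  then have "R\<^sup>2 * (t * D + x \<bullet> v) = t * (x \<bullet> l) + (R - t) * (R + t) * (x \<bullet> v)"
    by (simp add: algebra_simps power2_eq_square)
  then have "R\<^sup>2 * \<bar>t * D + x \<bullet> v\<bar> = \<bar>t * (x \<bullet> l) + (R - t) * (R + t) * (x \<bullet> v)\<bar>"
    by (metis abs_mult abs_of_nonneg zero_le_power2)
  also have "\<dots> \<le> t * \<bar>x \<bullet> l\<bar> + \<bar>R - t\<bar> * (R + t) * \<bar>x \<bullet> v\<bar>"
    using abs_triangle_ineq[of "t * (x \<bullet> l)" "(R - t) * (R + t) * (x \<bullet> v)"] t R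
    by (simp add: abs_mult)
  also have "\<dots> \<le> t * (R * norm l) + \<bar>R - t\<bar> * (R + t) * (R * norm v)"
    using Cauchy_Schwarz_ineq2[of x l] Cauchy_Schwarz_ineq2[of x v] t R
    by (intro add_mono mult_left_mono) (auto simp: R_def)
  also have "\<dots> \<le> R\<^sup>2 * (2 * norm l + 3 * \<rho> * norm v)"
  proof -
    have "t * (R * norm l) \<le> (2 * R) * (R * norm l)"
      using R by (intro mult_right_mono) auto
    moreover have "\<bar>R - t\<bar> * (R + t) * (R * norm v) \<le> \<rho> * (3 * R) * (R * norm v)"
      using R \<rho> t by (intro mult_right_mono mult_mono) auto
    ultimately show ?thesis
      by (simp add: algebra_simps power2_eq_square)
  qed
  finally have "\<bar>t * D + x \<bullet> v\<bar> \<le> 2 * norm l + 3 * \<rho> * norm v"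
    using R by simp
  then show ?thesis
    by (simp add: l_def \<rho>_def R_def)
qed

lemma scaling_sq_le_boosts:
  fixes x v :: "'a::real_inner"
  assumes "2 \<le> t" and "t - 1 \<le> norm x"
  shows "(t * D + x \<bullet> v)\<^sup>2
    \<le> 8 * (norm (D *\<^sub>R x + t *\<^sub>R v))\<^sup>2 + 18 * ((2 + norm x - t)\<^sup>2 * (D\<^sup>2 + (norm v)\<^sup>2))"
proof -
  define l where "l = norm (D *\<^sub>R x + t *\<^sub>R v)"
  define \<rho> where "\<rho> = 2 + norm x - t"
  have "(t * D + x \<bullet> v)\<^sup>2 \<le> (2 * l + 3 * \<rho> * norm v)\<^sup>2"
    using abs_scaling_le_boosts[OF assms, of D v] unfolding l_def \<rho>_def
    by (metis abs_le_square_iff abs_ge_zero abs_of_nonneg order_trans)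
  also have "\<dots> \<le> 8 * l\<^sup>2 + 18 * (\<rho>\<^sup>2 * (norm v)\<^sup>2)"
    using zero_le_power2[of "2 * l - 3 * \<rho> * norm v"]
    by (simp add: power2_eq_square algebra_simps)
  also have "\<dots> \<le> 8 * l\<^sup>2 + 18 * (\<rho>\<^sup>2 * (D\<^sup>2 + (norm v)\<^sup>2))"
    by (simp add: mult_left_mono)
  finally show ?thesis
    by (simp add: l_def \<rho>_def)
qed

lemma L0_sq_le:
  fixes w :: "('n::{finite,linorder}) stfun"
  assumes "2 \<le> t" and "t - 1 \<le> norm x"
  shows "(L0 w (t, x))\<^sup>2
    \<le> 8 * (\<Sum>a\<in>UNIV. (Lb a w (t, x))\<^sup>2) + 18 * ((2 + norm x - t)\<^sup>2 * gradZsq w (t, x))"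
proof -
  define v where "v = (\<chi> a. dx a w (t, x))"
  have "L0 w (t, x) = t * dt w (t, x) + x \<bullet> v"
    by (simp add: L0_def v_def inner_vec_def)
  moreover have "(norm (dt w (t, x) *\<^sub>R x + t *\<^sub>R v))\<^sup>2 = (\<Sum>a\<in>UNIV. (Lb a w (t, x))\<^sup>2)"
    unfolding power2_norm_eq_inner by (simp add: inner_vec_def v_def Lb_def power2_eq_square algebra_simps)
  moreover have "(dt w (t, x))\<^sup>2 + (norm v)\<^sup>2 = gradsq w (t, x)"
    unfolding power2_norm_eq_inner by (simp add: inner_vec_def v_def gradsq_def power2_eq_square)
  ultimately have "(L0 w (t, x))\<^sup>2
      \<le> 8 * (\<Sum>a\<in>UNIV. (Lb a w (t, x))\<^sup>2) + 18 * ((2 + norm x - t)\<^sup>2 * gradsq w (t, x))"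
    using scaling_sq_le_boosts[OF assms, of "dt w (t, x)" v] by simp
  also have "\<dots> \<le> 8 * (\<Sum>a\<in>UNIV. (Lb a w (t, x))\<^sup>2) + 18 * ((2 + norm x - t)\<^sup>2 * gradZsq w (t, x))"
    by (simp add: gradsq_le_gradZsq mult_left_mono)
  finally show ?thesis .
qed

lemma gradZsq_nonneg: "0 \<le> gradZsq w p"
  using gradsq_le_gradZsq[of w p] gradsq_nonneg[of w p] by linarith

lemma wint_L0_le:
  fixes w :: "('n::{finite,linorder}) stfun"
  assumes w: "C2 w" and t: "2 \<le> t"
  shows "wint \<Lambda> t (\<lambda>p. (L0 w p)\<^sup>2)
    \<le> 8 * (\<Sum>a\<in>UNIV. wint \<Lambda> t (\<lambda>p. (Lb a w p)\<^sup>2)) + 18 * wint (\<Lambda> + 2) t (gradZsq w)"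
proof -
  define Z where "Z p = (2 + norm (snd p) - fst p)\<^sup>2 * gradZsq w p" for p
  have [measurable]: "(\<lambda>x. (Lb a w (t, x))\<^sup>2) \<in> borel_measurable borel" for a
    using C1_continuous_on[OF C1_Lb[OF w]]
    by (intro borel_measurable_slice[of "\<lambda>p. (Lb a w p)\<^sup>2"] continuous_on_power)
  have [measurable]: "(\<lambda>x. gradZsq w (t, x)) \<in> borel_measurable borel"
    by (intro borel_measurable_slice continuous_on_gradZsq w)
  have [measurable]: "(\<lambda>x. Z (t, x)) \<in> borel_measurable borel"
    unfolding Z_def fst_conv snd_conv by measurable
  have Z: "0 \<le> Z p" for p
    by (simp add: Z_def gradZsq_nonneg)
  have "wint \<Lambda> t (\<lambda>p. (L0 w p)\<^sup>2) \<le> wint \<Lambda> t (\<lambda>p. 8 * (\<Sum>a\<in>UNIV. (Lb a w p)\<^sup>2) + 18 * Z p)"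
    by (rule wint_mono) (simp add: Z_def L0_sq_le t)
  also have "\<dots> = 8 * (\<Sum>a\<in>UNIV. wint \<Lambda> t (\<lambda>p. (Lb a w p)\<^sup>2)) + 18 * wint \<Lambda> t Z"
    using Z by (simp add: wint_add wint_cmult wint_sum sum_nonneg)
  also have "wint \<Lambda> t Z = wint (\<Lambda> + 2) t (gradZsq w)"
    unfolding Z_def by (rule wint_shift_weight[symmetric])
  finally show ?thesis .
qed

lemma wint_Lb_le:
  fixes w :: "('n::{finite,linorder}) stfun"
  assumes \<Lambda>: "-1 < \<Lambda>" and w: "C2 w" and t: "2 \<le> t"
  shows "wint \<Lambda> t (\<lambda>p. (Lb a w p)\<^sup>2) \<le> ennreal (4 / (\<Lambda> + 1)\<^sup>2) * wint (\<Lambda> + 2) t (gradZsq w)"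
proof (rule wint_hardy[OF \<Lambda> _ _ continuous_on_gradZsq[OF w] gradsq_Lb_le_gradZsq])
  show "1 < t" using t by simp
  show "Lb a w differentiable at p" for p
    using C1_Lb[OF w] unfolding C1_def by blast
  fix x :: "(real, 'n) vec" assume x: "t - 1 \<le> norm x"
  have "\<bar>Lb a w (t, x)\<bar> \<le> (norm x + t) * sqrt (gradsq w (t, x))"
    using abs_Lb_le[of a w t x] t by simp
  also have "\<dots> \<le> (2 * t * (2 + norm x - t)) * sqrt (gradZsq w (t, x))"
    using t x
    by (intro mult_mono norm_plus_time_le_weight real_sqrt_le_mono gradsq_le_gradZsq) (auto simp: gradsq_nonneg)
  finally show "\<bar>Lb a w (t, x)\<bar> \<le> 2 * t * (2 + norm x - t) * sqrt (gradZsq w (t, x))" .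
qed

lemma wint_Om_le:
  fixes w :: "('n::{finite,linorder}) stfun"
  assumes \<Lambda>: "-1 < \<Lambda>" and w: "C2 w" and t: "2 \<le> t" and ab: "a < b"
  shows "wint \<Lambda> t (\<lambda>p. (Om a b w p)\<^sup>2) \<le> ennreal (4 / (\<Lambda> + 1)\<^sup>2) * wint (\<Lambda> + 2) t (gradZsq w)"
proof (rule wint_hardy[OF \<Lambda> _ _ continuous_on_gradZsq[OF w] gradsq_Om_le_gradZsq[OF ab]])
  show "1 < t" using t by simp
  show "Om a b w differentiable at p" for p
    using C1_Om[OF w] unfolding C1_def by blast
  fix x :: "(real, 'n) vec" assume x: "t - 1 \<le> norm x"
  have "\<bar>Om a b w (t, x)\<bar> \<le> 2 * (norm x + t) * sqrt (gradsq w (t, x))"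
    using abs_Om_le[of a b w t x] t
    by (smt (verit) mult_right_mono real_sqrt_ge_zero gradsq_nonneg)
  also have "\<dots> \<le> 2 * (2 * t * (2 + norm x - t)) * sqrt (gradZsq w (t, x))"
    using t x
    by (intro mult_mono mult_left_mono norm_plus_time_le_weight real_sqrt_le_mono gradsq_le_gradZsq)
       (auto simp: gradsq_nonneg)
  finally show "\<bar>Om a b w (t, x)\<bar> \<le> 4 * t * (2 + norm x - t) * sqrt (gradZsq w (t, x))"
    by simp
qed

lemma wint_L0_le_gradZsq:
  fixes w :: "('n::{finite,linorder}) stfun"
  assumes \<Lambda>: "-1 < \<Lambda>" and w: "C2 w" and t: "2 \<le> t"
  shows "wint \<Lambda> t (\<lambda>p. (L0 w p)\<^sup>2)
    \<le> ennreal (8 * real CARD('n) * (4 / (\<Lambda> + 1)\<^sup>2) + 18) * wint (\<Lambda> + 2) t (gradZsq w)"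
proof -
  define c where "c = 4 / (\<Lambda> + 1)\<^sup>2"
  let ?W = "wint (\<Lambda> + 2) t (gradZsq w)"
  have c: "0 \<le> c" by (simp add: c_def)
  have "wint \<Lambda> t (\<lambda>p. (L0 w p)\<^sup>2) \<le> 8 * (\<Sum>a\<in>UNIV. wint \<Lambda> t (\<lambda>p. (Lb a w p)\<^sup>2)) + 18 * ?W"
    by (rule wint_L0_le[OF w t])
  also have "\<dots> \<le> 8 * (\<Sum>a\<in>(UNIV :: 'n set). ennreal c * ?W) + 18 * ?W"
    using wint_Lb_le[OF \<Lambda> w t] unfolding c_def by (intro add_mono mult_left_mono sum_mono) auto
  also have "\<dots> = ennreal (8 * real CARD('n) * c + 18) * ?W"
    using c by (simp add: ennreal_of_nat_eq_real_of_nat ennreal_mult ennreal_plus algebra_simps)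
  finally show ?thesis
    unfolding c_def .
qed

theorem lemma2p12:
  fixes \<Lambda> :: real
  assumes "CARD('n::{finite,linorder}) = 2 \<or> CARD('n) = 3"
    and "\<Lambda> > -1"
  shows "\<exists>C::real. C > 0 \<and>
    (\<forall>(w :: 'n stfun) (t :: real). C2 w \<and> t \<ge> 2 \<longrightarrow>
       (\<forall>a. wint \<Lambda> t (\<lambda>p. (Lb a w p)\<^sup>2) \<le> ennreal C * wint (\<Lambda> + 2) t (gradZsq w))
     \<and> (\<forall>a b. a < b \<longrightarrow> wint \<Lambda> t (\<lambda>p. (Om a b w p)\<^sup>2) \<le> ennreal C * wint (\<Lambda> + 2) t (gradZsq w))
     \<and> wint \<Lambda> t (\<lambda>p. (L0 w p)\<^sup>2) \<le> ennreal C * wint (\<Lambda> + 2) t (gradZsq w))"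
proof -
  define C where "C = 8 * real CARD('n) * (4 / (\<Lambda> + 1)\<^sup>2) + 18"
  have "1 \<le> real CARD('n)" by (simp add: Suc_le_eq)
  then have "1 \<le> 8 * real CARD('n)" by linarith
  then have "1 * (4 / (\<Lambda> + 1)\<^sup>2) \<le> (8 * real CARD('n)) * (4 / (\<Lambda> + 1)\<^sup>2)"
    by (rule mult_right_mono) simp
  then have C: "0 < C" "4 / (\<Lambda> + 1)\<^sup>2 \<le> C"
    unfolding C_def by (smt (verit) zero_le_divide_iff zero_le_power2)+
  have weaken: "ennreal (4 / (\<Lambda> + 1)\<^sup>2) * X \<le> ennreal C * X" for X
    using C by (intro mult_right_mono ennreal_leI) auto
  have L0: "wint \<Lambda> t (\<lambda>p. (L0 w p)\<^sup>2) \<le> ennreal C * wint (\<Lambda> + 2) t (gradZsq w)"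
    if "C2 w" "2 \<le> t" for w :: "'n stfun" and t
    unfolding C_def by (rule wint_L0_le_gradZsq[OF assms(2) that])
  show ?thesis
    using C L0 order_trans[OF wint_Lb_le[OF assms(2)] weaken] order_trans[OF wint_Om_le[OF assms(2)] weaken]
    by blast
qed

end
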